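(* Assume $\Delta=0$. Let $\lambda_1,\lambda_2,\lambda_3\in K$ be such that $\lambda_ic_i\in N$ for $i=1,2,3$, and let $s_i':=s_i\,\nu_i\in G$, where $\nu_i\in N$ is the element corresponding to $\lambda_ic_i$. Then for every integer $n\ge1$: (1) $(s_1's_2')^n=(s_1s_2)^n\,b_n$ with $b_n\in N$ given by $b_n=u_n(\alpha)\big[(\alpha u_n(\alpha)\lambda_1+u_{n-1}(\alpha)\lambda_2)c_1+\alpha(u_{n+1}(\alpha)\lambda_1+u_n(\alpha)\lambda_2)c_2\big]$ if $n$ is even, and $b_n=u_n(\alpha)\big[(u_n(\alpha)\lambda_1+u_{n-1}(\alpha)\lambda_2)c_1+(\alpha u_{n+1}(\alpha)\lambda_1+u_n(\alpha)\lambda_2)c_2\big]$ if $n$ is odd; (2) $(s_1's_3')^n=(s_1s_3)^n\,b'_n$ with $b'_n=u_n(\beta)\big[(\beta u_n(\beta)\lambda_1+u_{n-1}(\beta)\lambda_3)c_1+\beta(u_{n+1}(\beta)\lambda_1+u_n(\beta)\lambda_3)c_3\big]$ if $n$ is even, and $b'_n=u_n(\beta)\big[(u_n(\beta)\lambda_1+u_{n-1}(\beta)\lambda_3)c_1+(\beta u_{n+1}(\beta)\lambda_1+u_n(\beta)\lambda_3)c_3\big]$ if $n$ is odd; (3) $(s_2's_3')^n=(s_2s_3)^n\,b''_n$ with $b''_n=u_n(\gamma)\big[(\gamma u_n(\gamma)\lambda_2+m u_{n-1}(\gamma)\lambda_3)c_2+(l u_{n+1}(\gamma)\lambda_2+\gamma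 u_n(\gamma)\lambda_3)c_3\big]$ if $n$ is even, and $b''_n=u_n(\gamma)\big[(u_n(\gamma)\lambda_2+m u_{n-1}(\gamma)\lambda_3)c_2+(l u_{n+1}(\gamma)\lambda_2+u_n(\gamma)\lambda_3)c_3\big]$ if $n$ is odd. (Products of elements of $G$ are written multiplicatively; elements of $N$ are identified with vectors of $K^2$.)
   Context: Setting. Let $p,q,r\ge 3$ be integers and $W=W(p,q,r)$ the Coxeter group with generators $s_1,s_2,s_3$ and relations $s_i^2=1$, $(s_1s_2)^p=(s_1s_3)^q=(s_2s_3)^r=1$. Let $\alpha=4\cos^2(\pi k_1/p)$, $\beta=4\cos^2(\pi k_2/q)$, $\gamma=4\cos^2(\pi k_3/r)$ with $\gcd(k_1,p)=\gcd(k_2,q)=\gcd(k_3,r)=1$ (so $0<\alpha,\beta,\gamma<4$), and let $l,m\in\mathbb{C}$ with $lm=\gamma$. Let $K\subset\mathbb{C}$ be a field containing $\alpha,\beta,\gamma,l,m$, and $M$ a $3$-dimensional $K$-vector space with basis $(a_1,a_2,a_3)$. The reflection representation $R:W\to GL(M)$ with parameters $(\alpha,\beta,\gamma;l,m)$ is defined by: for $x=\lambda_1a_1+\lambda_2a_2+\lambda_3a_3$, $R(s_1)x=x-(2\lambda_1-\alpha\lambda_2-\beta\lambda_3)a_1$, $R(s_2)x=x-(-\lambda_1+2\lambda_2-l\lambda_3)a_2$, $R(s_3)x=x-(-\lambda_1-m\lambda_2+2\lambda_3)a_3$. Put $G=R(W)$ and write $s_i$ for $R(s_i)$. Let $\Delta=8-2\alpha-2\beta-2\gamma-(\alpha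 l+\beta m)$; $R$ is reducible iff $\Delta=0$. Reducible setting. Assume $\Delta=0$. Put $b=(4-\gamma)a_1+(l+2)a_2+(m+2)a_3$; then the space of $G$-fixed vectors is $C_M(G)=Kb$ and $(b,a_2,a_3)$ is a basis of $M$. Let $N=N(G)$ be the subgroup of elements of $G$ acting trivially on $M/C_M(G)$. Each $\zeta\in N$ satisfies $\zeta(b)=b$, $\zeta(a_2)=a_2+\lambda b$, $\zeta(a_3)=a_3+\mu b$ for a unique $(\lambda,\mu)\in K^2$; the map $\zeta\mapsto(\lambda,\mu)$ is an injective group homomorphism $N\to (K^2,+)$, through which $N$ is identified with an additive subgroup of $K^2$ (and written additively). Put $c_1=(\alpha,\beta)$, $c_2=(-2,l)$, $c_3=(m,-2)\in K^2$ and, for $\zeta=(\lambda,\mu)\in K^2$, $\omega(\zeta)=-\frac{\lambda(l+2)+\mu(m+2)}{4-\gamma}$. Polynomials $u_n$. Define $u_n\in\mathbb{Z}[X]$ for $n\ge-1$ by $u_{-1}=-1$, $u_0=0$, and for $n\ge0$: $u_{n+1}=Xu_n-u_{n-1}$ if $n$ is even, $u_{n+1}=u_n-u_{n-1}$ if $n$ is odd (so $u_1=u_2=1$, $u_3=X-1$). *)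

theory Defs
  imports Complex_Main
begin

text \<open>Vectors of M are written in coordinates w.r.t. the basis (a1,a2,a3);
  we take K = complex.\<close>

type_synonym vec3 = "complex \<times> complex \<times> complex"
type_synonym vec2 = "complex \<times> complex"

definition vadd :: "vec3 \<Rightarrow> vec3 \<Rightarrow> vec3" where
  "vadd x y = (fst x + fst y, fst (snd x) + fst (snd y), snd (snd x) + snd (snd y))"

definition vsub :: "vec3 \<Rightarrow> vec3 \<Rightarrow> vec3" where
  "vsub x y = (fst x - fst y, fst (snd x) - fst (snd y), snd (snd x) - snd (snd y))"

definition vscale :: "complex \<Rightarrow> vec3 \<Rightarrow> vec3" where
  "vscale c x = (c * fst x, c * fst (snd x), c * snd (snd x))"

definition padd :: "vec2 \<Rightarrow> vec2 \<Rightarrow> vec2" where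
  "padd x y = (fst x + fst y, snd x + snd y)"

definition pscale :: "complex \<Rightarrow> vec2 \<Rightarrow> vec2" where
  "pscale c x = (c * fst x, c * snd x)"

definition refl1 :: "complex \<Rightarrow> complex \<Rightarrow> vec3 \<Rightarrow> vec3" where
  "refl1 \<alpha> \<beta> = (\<lambda>(x1, x2, x3). (x1 - (2*x1 - \<alpha>*x2 - \<beta>*x3), x2, x3))"

definition refl2 :: "complex \<Rightarrow> vec3 \<Rightarrow> vec3" where
  "refl2 l = (\<lambda>(x1, x2, x3). (x1, x2 - (- x1 + 2*x2 - l*x3), x3))"

definition refl3 :: "complex \<Rightarrow> vec3 \<Rightarrow> vec3" where
  "refl3 m = (\<lambda>(x1, x2, x3). (x1, x2, x3 - (- x1 - m*x2 + 2*x3)))"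

text \<open>G = R(W): the group generated by the three reflections (which are
  involutions, so the generated monoid is the generated group).\<close>
inductive_set reflgrp :: "complex \<Rightarrow> complex \<Rightarrow> complex \<Rightarrow> complex \<Rightarrow> (vec3 \<Rightarrow> vec3) set"
  for \<alpha> \<beta> l m where
  id_in: "id \<in> reflgrp \<alpha> \<beta> l m"
| s1_in: "g \<in> reflgrp \<alpha> \<beta> l m \<Longrightarrow> refl1 \<alpha> \<beta> \<circ> g \<in> reflgrp \<alpha> \<beta> l m"
| s2_in: "g \<in> reflgrp \<alpha> \<beta> l m \<Longrightarrow> refl2 l \<circ> g \<in> reflgrp \<alpha> \<beta> l m"
| s3_in: "g \<in> reflgrp \<alpha> \<beta> l m \<Longrightarrow> refl3 m \<circ> g \<in> reflgrp \<alpha> \<beta> l m"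

definition fixvecs :: "(vec3 \<Rightarrow> vec3) set \<Rightarrow> vec3 set" where
  "fixvecs H = {v. \<forall>g\<in>H. g v = v}"

text \<open>N(G): elements of G acting trivially on M / C_M(G).\<close>
definition Nsub :: "(vec3 \<Rightarrow> vec3) set \<Rightarrow> (vec3 \<Rightarrow> vec3) set" where
  "Nsub H = {g \<in> H. \<forall>x. vsub (g x) x \<in> fixvecs H}"

definition bvec :: "complex \<Rightarrow> complex \<Rightarrow> complex \<Rightarrow> vec3" where
  "bvec \<gamma> l m = (4 - \<gamma>, l + 2, m + 2)"

definition omega :: "complex \<Rightarrow> complex \<Rightarrow> complex \<Rightarrow> vec2 \<Rightarrow> complex" where
  "omega \<gamma> l m z = - (fst z * (l + 2) + snd z * (m + 2)) / (4 - \<gamma>)"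

text \<open>The linear map corresponding to (lambda, mu) in K^2: it fixes b and sends
  a2 to a2 + lambda b, a3 to a3 + mu b.  Writing x = x1 a1 + x2 a2 + x3 a3 =
  (x1/(4-gamma)) b + (x2 - ..) a2 + (x3 - ..) a3 gives the formula
  x |-> x + (omega x1 + lambda x2 + mu x3) b.\<close>
definition nmap :: "complex \<Rightarrow> complex \<Rightarrow> complex \<Rightarrow> vec2 \<Rightarrow> vec3 \<Rightarrow> vec3" where
  "nmap \<gamma> l m z x = vadd x (vscale (omega \<gamma> l m z * fst x + fst z * fst (snd x)
       + snd z * snd (snd x)) (bvec \<gamma> l m))"

text \<open>The polynomials u_n evaluated at a point, for n >= 0 (u_{-1} = -1 only
  serves to produce u_1 = 1).\<close>
fun uev :: "nat \<Rightarrow> complex \<Rightarrow> complex" where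
  "uev 0 X = 0"
| "uev (Suc 0) X = 1"
| "uev (Suc (Suc n)) X =
     (if even (Suc n) then X * uev (Suc n) X else uev (Suc n) X) - uev n X"

end

theory Submission
  imports Defs
begin

text \<open>Every map \<open>nmap \<gamma> l m z\<close> is \<open>x \<mapsto> x + f_z(x) b\<close> with \<open>f_z\<close> linear in \<open>z\<close>, so \<open>z \<mapsto> \<nu>_z\<close> is a
  homomorphism from \<open>K\<^sup>2\<close>. Conjugating \<open>\<nu>_z\<close> by \<open>s\<^sub>i\<close> gives \<open>\<nu>_{z + \<phi>\<^sub>i(z) c\<^sub>i}\<close>
  (\<open>\<phi>\<^sub>1 = \<omega>\<close>, \<open>\<phi>\<^sub>2\<close>, \<open>\<phi>\<^sub>3\<close> the two coordinates), so in coordinates with respect to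
  \<open>(c\<^sub>i, c\<^sub>j)\<close> the generators act by reflections and \<open>s\<^sub>i s\<^sub>j\<close> by a linear map \<open>T\<close>.
  Pushing all \<open>\<nu>\<close>'s to the right, \<open>(s\<^sub>i' s\<^sub>j')\<^sup>n = (s\<^sub>i s\<^sub>j)\<^sup>n \<nu>_{B_n}\<close> with
  \<open>B_{n+1} = T B_n + d\<close>; the closed form of \<open>B_n\<close> follows by induction from the recurrence
  of the \<open>u\<^sub>n\<close> and a Cassini-type identity. Finally \<open>\<nu>_{B_n}\<close> is a product of elements
  of \<open>G\<close>, and every \<open>\<nu>_z\<close> in \<open>G\<close> lies in \<open>N\<close> because \<open>b\<close> is \<open>G\<close>-fixed.\<close>

definition nform :: "complex \<Rightarrow> complex \<Rightarrow> complex \<Rightarrow> vec2 \<Rightarrow> vec3 \<Rightarrow> complex" where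
  "nform \<gamma> l m z x = omega \<gamma> l m z * fst x + fst z * fst (snd x) + snd z * snd (snd x)"

lemma nmap_eq_nform: "nmap \<gamma> l m z x = vadd x (vscale (nform \<gamma> l m z x) (bvec \<gamma> l m))"
  by (simp add: nmap_def nform_def)

lemma omega_padd: "omega \<gamma> l m (padd z w) = omega \<gamma> l m z + omega \<gamma> l m w"
  by (simp add: omega_def padd_def diff_divide_distrib add_divide_distrib[symmetric] algebra_simps)

lemma omega_pscale: "omega \<gamma> l m (pscale c z) = c * omega \<gamma> l m z"
  by (simp add: omega_def pscale_def algebra_simps)

lemma nform_vadd_vscale:
  "nform \<gamma> l m z (vadd x (vscale t v)) = nform \<gamma> l m z x + t * nform \<gamma> l m z v"
  by (simp add: nform_def vadd_def vscale_def algebra_simps)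

definition pcomb :: "vec2 \<Rightarrow> vec2 \<Rightarrow> complex \<times> complex \<Rightarrow> vec2" where
  "pcomb c c' xy = padd (pscale (fst xy) c) (pscale (snd xy) c')"

lemma omega_pcomb: "omega \<gamma> l m (pcomb c c' (x, y)) = x * omega \<gamma> l m c + y * omega \<gamma> l m c'"
  by (simp add: pcomb_def omega_padd omega_pscale)

lemma fst_pcomb: "fst (pcomb c c' (x, y)) = x * fst c + y * fst c'"
  by (simp add: pcomb_def padd_def pscale_def)

lemma snd_pcomb: "snd (pcomb c c' (x, y)) = x * snd c + y * snd c'"
  by (simp add: pcomb_def padd_def pscale_def)

lemma pscale_padd_pscale: "pscale u (padd (pscale x c) (pscale y c')) = pcomb c c' (u * x, u * y)"
  by (simp add: pcomb_def padd_def pscale_def algebra_simps)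

lemma padd_pcomb: "padd (pcomb c c' z) (pcomb c c' w) = pcomb c c' (padd z w)"
  by (simp add: pcomb_def padd_def pscale_def algebra_simps)

lemma funpow_comp_conj:
  fixes E :: "vec2 \<Rightarrow> 'a \<Rightarrow> 'a"
  assumes hom: "\<And>z w. E z \<circ> E w = E (padd z w)"
    and E_zero: "E (0, 0) = id"
    and conj: "\<And>z. E z \<circ> P = P \<circ> E (T z)"
  shows "(P \<circ> E d) ^^ n = P ^^ n \<circ> E (((\<lambda>z. padd (T z) d) ^^ n) (0, 0))"
proof (induction n)
  case 0
  show ?case by (simp add: E_zero)
next
  case (Suc n)
  define B where "B = ((\<lambda>z. padd (T z) d) ^^ n) (0, 0)"
  have "(P \<circ> E d) ^^ Suc n = (P \<circ> E d) ^^ n \<circ> (P \<circ> E d)"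
    by (rule funpow_Suc_right)
  also have "\<dots> = P ^^ n \<circ> (E B \<circ> P) \<circ> E d"
    by (simp only: Suc.IH B_def comp_assoc)
  also have "\<dots> = P ^^ Suc n \<circ> (E (T B) \<circ> E d)"
    by (simp only: conj funpow_Suc_right comp_assoc)
  also have "\<dots> = P ^^ Suc n \<circ> E (((\<lambda>z. padd (T z) d) ^^ Suc n) (0, 0))"
    by (simp add: hom B_def)
  finally show ?case .
qed

lemma funpow_comp_inverse:
  fixes P Q :: "'a \<Rightarrow> 'a"
  assumes "Q \<circ> P = id"
  shows "Q ^^ n \<circ> P ^^ n = id"
proof (induction n)
  case (Suc n)
  have "Q ^^ Suc n \<circ> P ^^ Suc n = Q ^^ n \<circ> (Q \<circ> P) \<circ> P ^^ n"
    by (simp only: funpow_Suc_right[where f = Q] funpow.simps(2)[where f = P] comp_assoc)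
  then show ?case by (simp only: assms comp_id Suc.IH)
qed simp

lemma uev_cassini:
  "(if even j then (uev (Suc j) X)^2 + X * (uev j X)^2 - X * uev (Suc j) X * uev j X
    else X * (uev (Suc j) X)^2 + (uev j X)^2 - X * uev (Suc j) X * uev j X) = 1"
proof (induction j)
  case (Suc j)
  show ?case
  proof (cases "even j")
    case True
    have rec: "uev (Suc (Suc j)) X = uev (Suc j) X - uev j X"
      and IH: "(uev (Suc j) X)^2 + X * (uev j X)^2 - X * uev (Suc j) X * uev j X = 1"
      using True Suc.IH by simp_all
    have "X * (uev (Suc (Suc j)) X)^2 + (uev (Suc j) X)^2
        - X * uev (Suc (Suc j)) X * uev (Suc j) X = 1"
      unfolding rec using IH by algebra
    with True show ?thesis by simp
  next
    case False
    have rec: "uev (Suc (Suc j)) X = X * uev (Suc j) X - uev j X"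
      and IH: "X * (uev (Suc j) X)^2 + (uev j X)^2 - X * uev (Suc j) X * uev j X = 1"
      using False Suc.IH by simp_all
    have "(uev (Suc (Suc j)) X)^2 + X * (uev (Suc j) X)^2
        - X * uev (Suc (Suc j)) X * uev (Suc j) X = 1"
      unfolding rec using IH by algebra
    with False show ?thesis by simp
  qed
qed simp

definition coxeter_action :: "complex \<Rightarrow> complex \<Rightarrow> complex \<times> complex \<Rightarrow> complex \<times> complex" where
  "coxeter_action p q z = (p * snd z - fst z, q * (p * snd z - fst z) - snd z)"

definition shift_coord :: "complex \<Rightarrow> complex \<Rightarrow> complex \<Rightarrow> complex \<Rightarrow> nat \<Rightarrow> complex \<times> complex" where
  "shift_coord p q lam mu n = (let X = q * p; u = (\<lambda>k. uev k X) in
     if even n then (u n * (X * u n * lam + p * u (n - 1) * mu), u n * (q * u (n + 1) * lam + X * u n * mu))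
     else (u n * (u n * lam + p * u (n - 1) * mu), u n * (q * u (n + 1) * lam + u n * mu)))"

lemma iterate_coxeter_action:
  assumes "n \<ge> 1"
  shows "((\<lambda>z. padd (coxeter_action p q z) (lam, q * lam + mu)) ^^ n) (0, 0) = shift_coord p q lam mu n"
  using assms
proof (induction n rule: dec_induct)
  case base
  show ?case by (simp add: shift_coord_def coxeter_action_def padd_def)
next
  case (step n)
  then obtain j where n: "n = Suc j" by (cases n) auto
  define A B where "A = uev (Suc j) (q * p)" and "B = uev j (q * p)"
  have "padd (coxeter_action p q (shift_coord p q lam mu n)) (lam, q * lam + mu)
      = shift_coord p q lam mu (Suc n)"
  proof (cases "even j")
    case True
    have u: "uev (Suc (Suc j)) (q * p) = A - B" "uev (Suc (Suc (Suc j))) (q * p) = q * p * (A - B) - A"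
      using True by (simp_all add: A_def B_def)
    have cassini: "A^2 + q * p * B^2 - q * p * A * B = 1"
      using uev_cassini[of j "q * p"] True by (simp add: A_def B_def)
    have "shift_coord p q lam mu n = (A * (A * lam + p * B * mu), A * (q * (A - B) * lam + A * mu))"
      and "shift_coord p q lam mu (Suc n) = ((A - B) * (q * p * (A - B) * lam + p * A * mu),
          (A - B) * (q * (q * p * (A - B) - A) * lam + q * p * (A - B) * mu))"
      using True by (simp_all add: shift_coord_def Let_def n u A_def[symmetric] B_def[symmetric])
    then show ?thesis
      unfolding coxeter_action_def padd_def prod_eq_iff fst_conv snd_conv
      using cassini by (intro conjI; algebra)
  next
    case False
    have u: "uev (Suc (Suc j)) (q * p) = q * p * A - B" "uev (Suc (Suc (Suc j))) (q * p) = q * p * A - B - A"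
      using False by (simp_all add: A_def B_def)
    have cassini: "q * p * A^2 + B^2 - q * p * A * B = 1"
      using uev_cassini[of j "q * p"] False by (simp add: A_def B_def)
    have "shift_coord p q lam mu n = (A * (q * p * A * lam + p * B * mu), A * (q * (q * p * A - B) * lam + q * p * A * mu))"
      and "shift_coord p q lam mu (Suc n) = ((q * p * A - B) * ((q * p * A - B) * lam + p * A * mu),
          (q * p * A - B) * (q * (q * p * A - B - A) * lam + (q * p * A - B) * mu))"
      using False by (simp_all add: shift_coord_def Let_def n u A_def[symmetric] B_def[symmetric])
    then show ?thesis
      unfolding coxeter_action_def padd_def prod_eq_iff fst_conv snd_conv
      using cassini by (intro conjI; algebra)
  qed
  then show ?case using step.IH by simp
qed

lemma reflgrp_comp: "f \<in> reflgrp \<alpha> \<beta> l m \<Longrightarrow> g \<in> reflgrp \<alpha> \<beta> l m \<Longrightarrow> f \<circ> g \<in> reflgrp \<alpha> \<beta> l m"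
  by (induction f rule: reflgrp.induct) (auto simp: comp_assoc intro: reflgrp.intros)

lemma reflgrp_funpow: "f \<in> reflgrp \<alpha> \<beta> l m \<Longrightarrow> f ^^ n \<in> reflgrp \<alpha> \<beta> l m"
  by (induction n) (auto intro: reflgrp_comp reflgrp.id_in)

lemma refl1_in_reflgrp: "refl1 \<alpha> \<beta> \<in> reflgrp \<alpha> \<beta> l m"
  using reflgrp.s1_in[OF reflgrp.id_in] by simp

lemma refl2_in_reflgrp: "refl2 l \<in> reflgrp \<alpha> \<beta> l m"
  using reflgrp.s2_in[OF reflgrp.id_in] by simp

lemma refl3_in_reflgrp: "refl3 m \<in> reflgrp \<alpha> \<beta> l m"
  using reflgrp.s3_in[OF reflgrp.id_in] by simp

lemma refl1_involution: "refl1 \<alpha> \<beta> \<circ> refl1 \<alpha> \<beta> = id"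
  by (rule ext) (auto simp: refl1_def split: prod.splits)

lemma refl2_involution: "refl2 l \<circ> refl2 l = id"
  by (rule ext) (auto simp: refl2_def split: prod.splits)

lemma refl3_involution: "refl3 m \<circ> refl3 m = id"
  by (rule ext) (auto simp: refl3_def split: prod.splits)

lemma refl1_vadd: "refl1 \<alpha> \<beta> (vadd x y) = vadd (refl1 \<alpha> \<beta> x) (refl1 \<alpha> \<beta> y)"
  by (cases x; cases y) (simp add: refl1_def vadd_def algebra_simps)

lemma refl2_vadd: "refl2 l (vadd x y) = vadd (refl2 l x) (refl2 l y)"
  by (cases x; cases y) (simp add: refl2_def vadd_def algebra_simps)

lemma refl3_vadd: "refl3 m (vadd x y) = vadd (refl3 m x) (refl3 m y)"
  by (cases x; cases y) (simp add: refl3_def vadd_def algebra_simps)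

lemma four_cos_sq_ne_four:
  fixes k :: int and r :: nat
  assumes "r \<ge> 2" "gcd k (int r) = 1"
  shows "4 * (cos (pi * of_int k / of_nat r))\<^sup>2 \<noteq> 4"
proof
  assume "4 * (cos (pi * of_int k / of_nat r))\<^sup>2 = 4"
  then have "sin (pi * of_int k / of_nat r) = 0"
    using sin_cos_squared_add[of "pi * of_int k / of_nat r"] by simp
  then obtain i :: int where "pi * of_int k / of_nat r = of_int i * pi"
    by (auto simp: sin_zero_iff_int2)
  with assms(1) have "real_of_int k = real_of_int (i * int r)"
    by (simp add: field_simps)
  then have "k = i * int r" by (simp only: of_int_eq_iff)
  then have "int r dvd k" by simp
  then show False using assms by (simp add: gcd_proj2_if_dvd)
qed

locale reducible_reflection_rep =
  fixes \<alpha> \<beta> \<gamma> l m :: complex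
  assumes gamma_ne_4: "\<gamma> \<noteq> 4"
    and lm: "l * m = \<gamma>"
    and Delta_zero: "8 - 2 * \<alpha> - 2 * \<beta> - 2 * \<gamma> - (\<alpha> * l + \<beta> * m) = 0"
begin

abbreviation G where "G \<equiv> reflgrp \<alpha> \<beta> l m"
abbreviation \<nu> where "\<nu> \<equiv> nmap \<gamma> l m"
abbreviation b where "b \<equiv> bvec \<gamma> l m"

lemma nform_b: "nform \<gamma> l m z b = 0"
  using gamma_ne_4 by (simp add: nform_def omega_def bvec_def)

lemma nmap_padd: "\<nu> z \<circ> \<nu> w = \<nu> (padd z w)"
proof
  fix x
  have "nform \<gamma> l m z (vadd x (vscale t b)) = nform \<gamma> l m z x" for t
    by (simp add: nform_vadd_vscale nform_b)
  then show "(\<nu> z \<circ> \<nu> w) x = \<nu> (padd z w) x"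
    by (simp add: nmap_eq_nform nform_def omega_padd) (simp add: vadd_def vscale_def padd_def algebra_simps)
qed

lemma nmap_zero: "\<nu> (0, 0) = id"
  by (rule ext) (simp add: nmap_def omega_def vadd_def vscale_def)

lemma omega_c1: "omega \<gamma> l m (\<alpha>, \<beta>) = -2"
proof -
  have "\<alpha> * (l + 2) + \<beta> * (m + 2) = 2 * (4 - \<gamma>)"
    using Delta_zero by algebra
  moreover have "4 - \<gamma> \<noteq> 0" using gamma_ne_4 by simp
  ultimately show ?thesis by (simp add: omega_def field_simps)
qed

lemma omega_c2: "omega \<gamma> l m (-2, l) = 1"
  using gamma_ne_4 lm by (simp add: omega_def algebra_simps)

lemma omega_c3: "omega \<gamma> l m (m, -2) = 1"
  using gamma_ne_4 lm by (simp add: omega_def algebra_simps)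

lemma refl1_fixes_b: "refl1 \<alpha> \<beta> (vscale t b) = vscale t b"
  using Delta_zero by (simp add: refl1_def vscale_def bvec_def) algebra

lemma refl2_fixes_b: "refl2 l (vscale t b) = vscale t b"
  using lm by (simp add: refl2_def vscale_def bvec_def algebra_simps)

lemma refl3_fixes_b: "refl3 m (vscale t b) = vscale t b"
  using lm by (simp add: refl3_def vscale_def bvec_def algebra_simps)

lemma reflgrp_fixes_b: "g \<in> G \<Longrightarrow> g (vscale t b) = vscale t b"
  by (induction g rule: reflgrp.induct) (simp_all add: refl1_fixes_b refl2_fixes_b refl3_fixes_b)

lemma nmap_in_Nsub_iff: "\<nu> z \<in> Nsub G \<longleftrightarrow> \<nu> z \<in> G"
proof -
  have "vsub (\<nu> z x) x = vscale (nform \<gamma> l m z x) b" for x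
    by (cases x) (simp add: nmap_eq_nform vadd_def vsub_def vscale_def)
  then show ?thesis by (simp add: Nsub_def fixvecs_def reflgrp_fixes_b)
qed

lemma nmap_comp_eq:
  assumes "\<And>x t. s (vadd x (vscale t b)) = vadd (s x) (vscale t b)"
    and "\<And>x. nform \<gamma> l m z (s x) = nform \<gamma> l m z' x"
  shows "\<nu> z \<circ> s = s \<circ> \<nu> z'"
  by (rule ext) (simp add: nmap_eq_nform assms)

lemma nmap_comp_refl1:
  "\<nu> z \<circ> refl1 \<alpha> \<beta> = refl1 \<alpha> \<beta> \<circ> \<nu> (padd z (pscale (omega \<gamma> l m z) (\<alpha>, \<beta>)))"
proof (rule nmap_comp_eq)
  show "refl1 \<alpha> \<beta> (vadd x (vscale t b)) = vadd (refl1 \<alpha> \<beta> x) (vscale t b)" for x t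
    by (simp add: refl1_vadd refl1_fixes_b)
  show "nform \<gamma> l m z (refl1 \<alpha> \<beta> x) = nform \<gamma> l m (padd z (pscale (omega \<gamma> l m z) (\<alpha>, \<beta>))) x" for x
    by (cases x) (simp add: nform_def omega_padd omega_pscale omega_c1 refl1_def, simp add: padd_def pscale_def algebra_simps)
qed

lemma nmap_comp_refl2: "\<nu> z \<circ> refl2 l = refl2 l \<circ> \<nu> (padd z (pscale (fst z) (-2, l)))"
proof (rule nmap_comp_eq)
  show "refl2 l (vadd x (vscale t b)) = vadd (refl2 l x) (vscale t b)" for x t
    by (simp add: refl2_vadd refl2_fixes_b)
  show "nform \<gamma> l m z (refl2 l x) = nform \<gamma> l m (padd z (pscale (fst z) (-2, l))) x" for x
    by (cases x) (simp add: nform_def omega_padd omega_pscale omega_c2 refl2_def, simp add: padd_def pscale_def algebra_simps)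
qed

lemma nmap_comp_refl3: "\<nu> z \<circ> refl3 m = refl3 m \<circ> \<nu> (padd z (pscale (snd z) (m, -2)))"
proof (rule nmap_comp_eq)
  show "refl3 m (vadd x (vscale t b)) = vadd (refl3 m x) (vscale t b)" for x t
    by (simp add: refl3_vadd refl3_fixes_b)
  show "nform \<gamma> l m z (refl3 m x) = nform \<gamma> l m (padd z (pscale (snd z) (m, -2))) x" for x
    by (cases x) (simp add: nform_def omega_padd omega_pscale omega_c3 refl3_def, simp add: padd_def pscale_def algebra_simps)
qed

text \<open>The hypotheses say that \<open>sA\<close> and \<open>sB\<close> act on \<open>N\<close> as the simple reflections of
  the Cartan matrix \<open>((2, -p), (-q, 2))\<close> in the basis \<open>(c, c')\<close>; in coordinates they are
  \<open>(x, y) \<mapsto> (p y - x, y)\<close> and \<open>(x, y) \<mapsto> (x, q x - y)\<close>, whose composite is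
  \<open>coxeter_action p q\<close>.\<close>

lemma nmap_twisted_dihedral_power:
  fixes sA sB :: "vec3 \<Rightarrow> vec3" and \<phi> \<psi> :: "vec2 \<Rightarrow> complex"
  assumes conjA: "\<And>z. \<nu> z \<circ> sA = sA \<circ> \<nu> (padd z (pscale (\<phi> z) c))"
    and conjB: "\<And>z. \<nu> z \<circ> sB = sB \<circ> \<nu> (padd z (pscale (\<psi> z) c'))"
    and \<phi>: "\<And>x y. \<phi> (pcomb c c' (x, y)) = x * \<phi> c + y * \<phi> c'" "\<phi> c = -2" "\<phi> c' = p"
    and \<psi>: "\<And>x y. \<psi> (pcomb c c' (x, y)) = x * \<psi> c + y * \<psi> c'" "\<psi> c = q" "\<psi> c' = -2"
    and "n \<ge> 1"
  shows "((sA \<circ> \<nu> (pscale lam c)) \<circ> (sB \<circ> \<nu> (pscale mu c'))) ^^ n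
    = (sA \<circ> sB) ^^ n \<circ> \<nu> (pcomb c c' (shift_coord p q lam mu n))"
proof -
  define E where "E z = \<nu> (pcomb c c' z)" for z
  have hom: "E z \<circ> E w = E (padd z w)" for z w
    by (simp add: E_def nmap_padd padd_pcomb)
  have E_zero: "E (0, 0) = id"
    by (simp add: E_def pcomb_def pscale_def padd_def nmap_zero)
  have reflA: "E (x, y) \<circ> sA = sA \<circ> E (p * y - x, y)" for x y
  proof -
    have "padd (pcomb c c' (x, y)) (pscale (\<phi> (pcomb c c' (x, y))) c) = pcomb c c' (p * y - x, y)"
      by (simp only: \<phi>) (simp add: pcomb_def padd_def pscale_def algebra_simps)
    then show ?thesis by (simp add: E_def conjA)
  qed
  have reflB: "E (x, y) \<circ> sB = sB \<circ> E (x, q * x - y)" for x y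
  proof -
    have "padd (pcomb c c' (x, y)) (pscale (\<psi> (pcomb c c' (x, y))) c') = pcomb c c' (x, q * x - y)"
      by (simp only: \<psi>) (simp add: pcomb_def padd_def pscale_def algebra_simps)
    then show ?thesis by (simp add: E_def conjB)
  qed
  have conj: "E z \<circ> (sA \<circ> sB) = (sA \<circ> sB) \<circ> E (coxeter_action p q z)" for z
  proof -
    have "E z \<circ> (sA \<circ> sB) = sA \<circ> (E (p * snd z - fst z, snd z) \<circ> sB)"
      using reflA[of "fst z" "snd z"] by (simp add: comp_assoc[symmetric])
    also have "\<dots> = (sA \<circ> sB) \<circ> E (coxeter_action p q z)"
      by (simp add: reflB coxeter_action_def comp_assoc)
    finally show ?thesis .
  qed
  have "(sA \<circ> \<nu> (pscale lam c)) \<circ> (sB \<circ> \<nu> (pscale mu c')) = sA \<circ> (E (lam, 0) \<circ> sB) \<circ> E (0, mu)"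
    by (simp add: E_def pcomb_def pscale_def padd_def comp_assoc)
  also have "\<dots> = (sA \<circ> sB) \<circ> E (lam, q * lam + mu)"
    by (simp add: reflB comp_assoc hom padd_def)
  finally have factor: "(sA \<circ> \<nu> (pscale lam c)) \<circ> (sB \<circ> \<nu> (pscale mu c')) = (sA \<circ> sB) \<circ> E (lam, q * lam + mu)" .
  have "((sA \<circ> sB) \<circ> E (lam, q * lam + mu)) ^^ n = (sA \<circ> sB) ^^ n \<circ> E (shift_coord p q lam mu n)"
    unfolding funpow_comp_conj[OF hom E_zero conj] iterate_coxeter_action[OF \<open>n \<ge> 1\<close>] ..
  then show ?thesis
    unfolding factor E_def .
qed

lemma nmap_in_Nsub_if_funpow_eq:
  assumes "X \<in> G" "sA \<in> G" "sB \<in> G" "sA \<circ> sA = id" "sB \<circ> sB = id"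
    and "X ^^ n = (sA \<circ> sB) ^^ n \<circ> \<nu> w"
  shows "\<nu> w \<in> Nsub G"
proof -
  have "sB \<circ> sA \<circ> (sA \<circ> sB) = id"
    by (metis assms(4,5) comp_assoc comp_id)
  then have "(sB \<circ> sA) ^^ n \<circ> (sA \<circ> sB) ^^ n = id"
    by (rule funpow_comp_inverse)
  then have "\<nu> w = (sB \<circ> sA) ^^ n \<circ> X ^^ n"
    by (metis assms(6) comp_assoc id_comp)
  also have "\<dots> \<in> G"
    by (intro reflgrp_comp reflgrp_funpow assms(1-3))
  finally show ?thesis
    by (simp add: nmap_in_Nsub_iff)
qed

end

theorem proposition3:
  fixes p q r :: nat and k1 k2 k3 :: int
    and \<alpha> \<beta> \<gamma> l m lam1 lam2 lam3 :: complex and n :: nat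
  assumes "p \<ge> 3" "q \<ge> 3" "r \<ge> 3"
    and "gcd k1 (int p) = 1" "gcd k2 (int q) = 1" "gcd k3 (int r) = 1"
    and "\<alpha> = of_real (4 * (cos (pi * of_int k1 / of_nat p))\<^sup>2)"
    and "\<beta> = of_real (4 * (cos (pi * of_int k2 / of_nat q))\<^sup>2)"
    and "\<gamma> = of_real (4 * (cos (pi * of_int k3 / of_nat r))\<^sup>2)"
    and "l * m = \<gamma>"
    and "8 - 2*\<alpha> - 2*\<beta> - 2*\<gamma> - (\<alpha>*l + \<beta>*m) = 0"
    and "nmap \<gamma> l m (pscale lam1 (\<alpha>, \<beta>)) \<in> Nsub (reflgrp \<alpha> \<beta> l m)"
    and "nmap \<gamma> l m (pscale lam2 (-2, l)) \<in> Nsub (reflgrp \<alpha> \<beta> l m)"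
    and "nmap \<gamma> l m (pscale lam3 (m, -2)) \<in> Nsub (reflgrp \<alpha> \<beta> l m)"
    and "n \<ge> 1"
  shows
   "let G = reflgrp \<alpha> \<beta> l m; c1 = (\<alpha>, \<beta>); c2 = (-2, l); c3 = (m, -2);
        s1 = refl1 \<alpha> \<beta>; s2 = refl2 l; s3 = refl3 m;
        s1' = s1 \<circ> nmap \<gamma> l m (pscale lam1 c1);
        s2' = s2 \<circ> nmap \<gamma> l m (pscale lam2 c2);
        s3' = s3 \<circ> nmap \<gamma> l m (pscale lam3 c3);
        u = (\<lambda>k x. uev k x);
        bn = (if even n then
                pscale (u n \<alpha>) (padd (pscale (\<alpha> * u n \<alpha> * lam1 + u (n-1) \<alpha> * lam2) c1)
                                     (pscale (\<alpha> * (u (n+1) \<alpha> * lam1 + u n \<alpha> * lam2)) c2))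
              else
                pscale (u n \<alpha>) (padd (pscale (u n \<alpha> * lam1 + u (n-1) \<alpha> * lam2) c1)
                                     (pscale (\<alpha> * u (n+1) \<alpha> * lam1 + u n \<alpha> * lam2) c2)));
        bn' = (if even n then
                pscale (u n \<beta>) (padd (pscale (\<beta> * u n \<beta> * lam1 + u (n-1) \<beta> * lam3) c1)
                                     (pscale (\<beta> * (u (n+1) \<beta> * lam1 + u n \<beta> * lam3)) c3))
              else
                pscale (u n \<beta>) (padd (pscale (u n \<beta> * lam1 + u (n-1) \<beta> * lam3) c1)
                                     (pscale (\<beta> * u (n+1) \<beta> * lam1 + u n \<beta> * lam3) c3)));
        bn'' = (if even n then
                pscale (u n \<gamma>) (padd (pscale (\<gamma> * u n \<gamma> * lam2 + m * u (n-1) \<gamma> * lam3) c2)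
                                     (pscale (l * u (n+1) \<gamma> * lam2 + \<gamma> * u n \<gamma> * lam3) c3))
              else
                pscale (u n \<gamma>) (padd (pscale (u n \<gamma> * lam2 + m * u (n-1) \<gamma> * lam3) c2)
                                     (pscale (l * u (n+1) \<gamma> * lam2 + u n \<gamma> * lam3) c3)))
    in nmap \<gamma> l m bn \<in> Nsub G \<and> (s1' \<circ> s2') ^^ n = (s1 \<circ> s2) ^^ n \<circ> nmap \<gamma> l m bn
     \<and> nmap \<gamma> l m bn' \<in> Nsub G \<and> (s1' \<circ> s3') ^^ n = (s1 \<circ> s3) ^^ n \<circ> nmap \<gamma> l m bn'
     \<and> nmap \<gamma> l m bn'' \<in> Nsub G \<and> (s2' \<circ> s3') ^^ n = (s2 \<circ> s3) ^^ n \<circ> nmap \<gamma> l m bn''"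
proof -
  have "\<gamma> \<noteq> 4"
  proof
    assume "\<gamma> = 4"
    then have "4 * (cos (pi * of_int k3 / of_nat r))\<^sup>2 = (4 :: real)"
      using assms(9) by (metis of_real_eq_iff of_real_numeral)
    with four_cos_sq_ne_four[of r k3] assms(3,6) show False by simp
  qed
  then interpret reducible_reflection_rep \<alpha> \<beta> \<gamma> l m
    using assms(10,11) by unfold_locales
  have "\<nu> (pscale lam1 (\<alpha>, \<beta>)) \<in> G" "\<nu> (pscale lam2 (-2, l)) \<in> G" "\<nu> (pscale lam3 (m, -2)) \<in> G"
    using assms(12-14) by (simp_all only: nmap_in_Nsub_iff)
  note in_G = reflgrp_comp this refl1_in_reflgrp refl2_in_reflgrp refl3_in_reflgrp
  note inv = refl1_involution refl2_involution refl3_involution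
  note P12 = nmap_twisted_dihedral_power[OF nmap_comp_refl1 nmap_comp_refl2
      omega_pcomb omega_c1 omega_c2 fst_pcomb fst_conv fst_conv \<open>n \<ge> 1\<close>, of lam1 lam2]
  note P13 = nmap_twisted_dihedral_power[OF nmap_comp_refl1 nmap_comp_refl3
      omega_pcomb omega_c1 omega_c3 snd_pcomb snd_conv snd_conv \<open>n \<ge> 1\<close>, of lam1 lam3]
  note P23 = nmap_twisted_dihedral_power[OF nmap_comp_refl2 nmap_comp_refl3
      fst_pcomb fst_conv fst_conv snd_pcomb snd_conv snd_conv \<open>n \<ge> 1\<close>, of lam2 lam3]
  have "\<nu> (pcomb (\<alpha>, \<beta>) (-2, l) (shift_coord 1 \<alpha> lam1 lam2 n)) \<in> Nsub G"
    "\<nu> (pcomb (\<alpha>, \<beta>) (m, -2) (shift_coord 1 \<beta> lam1 lam3 n)) \<in> Nsub G"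
    "\<nu> (pcomb (-2, l) (m, -2) (shift_coord m l lam2 lam3 n)) \<in> Nsub G"
    by (rule nmap_in_Nsub_if_funpow_eq[OF _ _ _ _ _ P12] nmap_in_Nsub_if_funpow_eq[OF _ _ _ _ _ P13]
        nmap_in_Nsub_if_funpow_eq[OF _ _ _ _ _ P23]; intro in_G inv)+
  with P12 P13 P23 show ?thesis
    by (cases "even n") (simp_all add: Let_def shift_coord_def pscale_padd_pscale lm distrib_left mult.assoc)
qed

end
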